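(* Let ${\bf a}=(a_1,\dots,a_n)\in(\mathbb C^* )^n$ and $ev_{\bf a}:\mathfrak{OA}\to\bigoplus^n\mathfrak{sl}_2$, $X\mapsto(ev_{a_1}(X),\dots,ev_{a_n}(X))$. Then $\ker(ev_{\bf a})=\mathfrak I_{U_{\bf a}(t)}$. Moreover $ev_{\bf a}$ is surjective if and only if $a_j\neq\pm1$ for all $j$ and $a_j\neq a_k^{\pm1}$ for all $j\neq k$.
   Context: Work over $\mathbb C$. $\mathfrak{sl}_2$ has basis $e,f,h$ with $[e,f]=h$, $[h,e]=2e$, $[h,f]=-2f$. The Onsager algebra is the Lie subalgebra $\mathfrak{OA}=\{p(t)e+p(t^{-1})f+q(t)h:\ p,q\in\mathbb C[t,t^{-1}],\ q(t^{-1})=-q(t)\}$ of the loop algebra $\mathbb C[t,t^{-1}]\otimes\mathfrak{sl}_2$. For $a\in\mathbb C^*$, $ev_a:\mathfrak{OA}\to\mathfrak{sl}_2$, $p(t)x\mapsto p(a)x$; $U_a(t)=t^2-(a+a^{-1})t+1$ if $a^2\neq1$ and $U_a(t)=t-a$ if $a=\pm1$ (note $U_a=U_{a^{-1}}$). $U_{\bf a}(t)$ is the product of the distinct polynomials among $U_{a_1}(t),\dots,U_{a_n}(t)$. For a reciprocal polynomial $P$ (nonconstant monic with $P(t)=\pm t^{\deg P}P(t^{-1})$), $\mathfrak I_{P(t)}=\{p(t)e+p(t^{-1})f+q(t)h\in\mathfrak{OA}:\ p(t),q(t)\in P(t)\mathbb C[t,t^{-1}]\}$. *)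

theory Defs
  imports "HOL-Computational_Algebra.Formal_Laurent_Series" "HOL-Computational_Algebra.Polynomial_FPS"
begin

definition lpoly :: "complex fls \<Rightarrow> bool" where
  "lpoly f \<longleftrightarrow> finite {n. fls_nth f n \<noteq> 0}"

definition lp_eval :: "complex fls \<Rightarrow> complex \<Rightarrow> complex" where
  "lp_eval f a = (\<Sum>n\<in>{n. fls_nth f n \<noteq> 0}. fls_nth f n * a powi n)"

text \<open>The substitution p(t) to p(t^-1) (meaningful for Laurent polynomials).\<close>
definition lp_refl :: "complex fls \<Rightarrow> complex fls" where
  "lp_refl f = Abs_fls (\<lambda>n. fls_nth f (- n))"

definition lp_of_poly :: "complex poly \<Rightarrow> complex fls" where
  "lp_of_poly P = fps_to_fls (fps_of_poly P)"

text \<open>Elements of the loop algebra C[t,t^-1] (x) sl2 are triples (A,B,C) standing for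
  A e + B f + C h.  The Onsager algebra:\<close>
definition OA :: "(complex fls \<times> complex fls \<times> complex fls) set" where
  "OA = {(p, lp_refl p, q) | p q. lpoly p \<and> lpoly q \<and> lp_refl q = - q}"

text \<open>Elements of sl2 are coordinate triples w.r.t. the basis e, f, h.\<close>
definition ev :: "complex \<Rightarrow> complex fls \<times> complex fls \<times> complex fls \<Rightarrow> complex \<times> complex \<times> complex" where
  "ev a X = (case X of (A, B, C) \<Rightarrow> (lp_eval A a, lp_eval B a, lp_eval C a))"

definition ev_list :: "complex list \<Rightarrow> complex fls \<times> complex fls \<times> complex fls \<Rightarrow> (complex \<times> complex \<times> complex) list" where
  "ev_list as X = map (\<lambda>a. ev a X) as"

definition U :: "complex \<Rightarrow> complex poly" where
  "U a = (if a\<^sup>2 \<noteq> 1 then [:1, - (a + inverse a), 1:] else [:- a, 1:])"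

definition U_list :: "complex list \<Rightarrow> complex poly" where
  "U_list as = \<Prod> (U ` set as)"

definition I_P :: "complex poly \<Rightarrow> (complex fls \<times> complex fls \<times> complex fls) set" where
  "I_P P = {X \<in> OA. case X of (p, _, q) \<Rightarrow>
      (\<exists>r. lpoly r \<and> p = lp_of_poly P * r) \<and> (\<exists>s. lpoly s \<and> q = lp_of_poly P * s)}"

end

theory Submission
  imports Defs
begin

text \<open>An element of the Onsager algebra is a pair (p, q) of Laurent polynomials with
  q(1/t) = -q(t), and ev_a sends it to (p(a), p(1/a), q(a)). Because q is antisymmetric,
  X lies in the kernel of ev_a iff p and q both vanish at all the points a_j and 1/a_j.
  A Laurent polynomial vanishing on a finite set R of nonzero points is a multiple of the
  product of the t - c over c in R, and for R = {a_j, 1/a_j} this product is U_a(t).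

  For surjectivity, the e- and f-components of ev_a(X) are the values of p at the 2n points
  a_1, ..., a_n, 1/a_1, ..., 1/a_n. They can be prescribed arbitrarily iff these points are
  pairwise distinct, which is exactly the condition of the theorem; interpolation then also
  gives the h-components, taking q(t) = g(t) - g(1/t) where g takes the values h_j/2 at a_j
  and -h_j/2 at 1/a_j.\<close>

unbundle fps_syntax

lemma prod_linear_factors_dvd:
  fixes Q :: "'a::idom poly"
  assumes "finite R" "\<forall>c\<in>R. poly Q c = 0"
  shows "(\<Prod>c\<in>R. [:-c, 1:]) dvd Q"
  using assms
proof (induction R arbitrary: Q rule: finite_induct)
  case empty
  show ?case by simp
next
  case (insert c R)
  have "[:-c, 1:] dvd Q" using insert.prems by (simp add: poly_eq_0_iff_dvd)
  then obtain Q' where Q: "Q = [:-c, 1:] * Q'" by (elim dvdE)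
  have "poly Q' d = 0" if "d \<in> R" for d
  proof -
    have "d \<noteq> c" "poly Q d = 0" using insert that by auto
    thus ?thesis by (simp add: Q)
  qed
  hence "(\<Prod>c\<in>R. [:-c, 1:]) dvd Q'" using insert.IH by blast
  hence "[:-c, 1:] * (\<Prod>c\<in>R. [:-c, 1:]) dvd Q"
    unfolding Q by (rule mult_dvd_mono[OF dvd_refl])
  thus ?case using insert(1,2) by (subst prod.insert) auto
qed

lemma poly_prod_linear_factors_eq_0_iff:
  fixes x :: "'a::idom"
  assumes "finite R"
  shows "poly (\<Prod>c\<in>R. [:-c, 1:]) x = 0 \<longleftrightarrow> x \<in> R"
  using assms by (auto simp: poly_prod)

lemma poly_interpolation:
  fixes xs ys :: "'a::field list"
  assumes "distinct xs" "length ys = length xs"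
  shows "\<exists>P. map (poly P) xs = ys"
  using assms
proof (induction xs arbitrary: ys)
  case Nil
  thus ?case by simp
next
  case (Cons x xs)
  then obtain y ys' where ys: "ys = y # ys'" "length ys' = length xs" by (cases ys) auto
  obtain P where P: "map (poly P) xs = ys'" using Cons ys by auto
  define L where "L = (\<Prod>c\<in>set xs. [:-c, 1:])"
  have L: "poly L c = 0 \<longleftrightarrow> c \<in> set xs" for c
    unfolding L_def by (simp add: poly_prod_linear_factors_eq_0_iff)
  define P' where "P' = P + smult ((y - poly P x) / poly L x) L"
  have "map (poly P') xs = ys'" using P L by (auto simp: P'_def)
  moreover have "poly P' x = y" using L Cons.prems by (simp add: P'_def)
  ultimately show ?case using ys by auto
qed

lemma lp_eval_eq_sum_superset:
  assumes "finite S" "{n. f $$ n \<noteq> 0} \<subseteq> S"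
  shows "lp_eval f a = (\<Sum>n\<in>S. f $$ n * a powi n)"
  unfolding lp_eval_def by (rule sum.mono_neutral_left) (use assms in auto)

text \<open>The hypothesis is needed because lp_refl is defined through Abs_fls, which
  only represents coefficient sequences vanishing for all sufficiently negative indices.\<close>

lemma lp_refl_nth:
  assumes "lpoly f"
  shows "lp_refl f $$ n = f $$ (- n)"
proof -
  have fin: "finite {n. f $$ n \<noteq> 0}" using assms by (simp add: lpoly_def)
  have "finite {k::nat. f $$ (- (- int k)) \<noteq> 0}"
    by (rule finite_subset[of _ "nat ` {n. f $$ n \<noteq> 0}"])
      (use fin in \<open>auto simp: image_iff intro!: exI[of _ "int _"]\<close>)
  hence "\<forall>\<^sub>\<infinity>k. (\<lambda>n. f $$ (- n)) (- int k) = 0"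
    by (simp add: eventually_cofinite)
  thus ?thesis unfolding lp_refl_def by simp
qed

lemma lpoly_lp_refl:
  assumes "lpoly f"
  shows "lpoly (lp_refl f)"
proof -
  have "{n. lp_refl f $$ n \<noteq> 0} = uminus ` {n. f $$ n \<noteq> 0}"
    using lp_refl_nth[OF assms] by (auto simp: image_iff intro!: exI[of _ "- _"])
  thus ?thesis using assms by (simp add: lpoly_def)
qed

lemma lp_refl_lp_refl: "lpoly f \<Longrightarrow> lp_refl (lp_refl f) = f"
  by (rule fls_eqI) (simp add: lp_refl_nth lpoly_lp_refl)

lemma lpoly_diff: "lpoly f \<Longrightarrow> lpoly g \<Longrightarrow> lpoly (f - g)"
  unfolding lpoly_def
  by (rule finite_subset[of _ "{n. f $$ n \<noteq> 0} \<union> {n. g $$ n \<noteq> 0}"]) auto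

lemma lp_refl_diff: "lpoly f \<Longrightarrow> lpoly g \<Longrightarrow> lp_refl (f - g) = lp_refl f - lp_refl g"
  by (rule fls_eqI) (simp add: lp_refl_nth lpoly_diff)

lemma lp_eval_uminus: "lp_eval (- f) a = - lp_eval f a"
  unfolding lp_eval_def by (simp add: sum_negf)

lemma lp_eval_diff:
  assumes "lpoly f" "lpoly g"
  shows "lp_eval (f - g) a = lp_eval f a - lp_eval g a"
proof -
  let ?S = "{n. f $$ n \<noteq> 0} \<union> {n. g $$ n \<noteq> 0}"
  have S: "finite ?S" using assms by (simp add: lpoly_def)
  have "lp_eval (f - g) a = (\<Sum>n\<in>?S. (f - g) $$ n * a powi n)"
    by (rule lp_eval_eq_sum_superset[OF S]) auto
  also have "\<dots> = (\<Sum>n\<in>?S. f $$ n * a powi n) - (\<Sum>n\<in>?S. g $$ n * a powi n)"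
    by (simp add: left_diff_distrib sum_subtractf)
  also have "(\<Sum>n\<in>?S. f $$ n * a powi n) = lp_eval f a"
    by (rule lp_eval_eq_sum_superset[OF S, symmetric]) auto
  also have "(\<Sum>n\<in>?S. g $$ n * a powi n) = lp_eval g a"
    by (rule lp_eval_eq_sum_superset[OF S, symmetric]) auto
  finally show ?thesis .
qed

lemma lp_eval_lp_refl:
  assumes "lpoly f"
  shows "lp_eval (lp_refl f) a = lp_eval f (inverse a)"
proof -
  have "lp_eval (lp_refl f) a = (\<Sum>n\<in>uminus ` {n. f $$ n \<noteq> 0}. lp_refl f $$ n * a powi n)"
    by (rule lp_eval_eq_sum_superset)
      (use assms in \<open>auto simp: lp_refl_nth lpoly_def image_iff intro!: exI[of _ "- _"]\<close>)
  also have "\<dots> = (\<Sum>n\<in>{n. f $$ n \<noteq> 0}. f $$ n * a powi (- n))"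
    by (subst sum.reindex) (auto simp: inj_on_def lp_refl_nth assms)
  also have "\<dots> = lp_eval f (inverse a)"
    unfolding lp_eval_def by (simp add: power_int_minus power_int_inverse)
  finally show ?thesis .
qed

lemma lp_eval_antisymmetric:
  assumes "lpoly q" "lp_refl q = - q"
  shows "lp_eval q (inverse a) = - lp_eval q a"
  using lp_eval_lp_refl[OF assms(1), of a] by (simp add: assms(2) lp_eval_uminus)

lemma support_shift_lp_of_poly:
  "{n. fls_shift m (lp_of_poly P) $$ n \<noteq> 0} \<subseteq> (\<lambda>i. int i - m) ` {..degree P}"
proof
  fix n assume "n \<in> {n. fls_shift m (lp_of_poly P) $$ n \<noteq> 0}"
  hence n: "n + m \<ge> 0" "coeff P (nat (n + m)) \<noteq> 0"
    by (auto simp: lp_of_poly_def split: if_splits)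
  hence "nat (n + m) \<le> degree P" using le_degree by blast
  thus "n \<in> (\<lambda>i. int i - m) ` {..degree P}"
    using n by (auto simp: image_iff intro!: bexI[of _ "nat (n + m)"])
qed

lemma lpoly_shift_lp_of_poly: "lpoly (fls_shift m (lp_of_poly P))"
  unfolding lpoly_def by (rule finite_subset[OF support_shift_lp_of_poly]) auto

lemma lp_eval_shift_lp_of_poly:
  assumes "a \<noteq> 0"
  shows "lp_eval (fls_shift m (lp_of_poly P)) a = a powi (- m) * poly P a"
proof -
  have "lp_eval (fls_shift m (lp_of_poly P)) a =
      (\<Sum>n\<in>(\<lambda>i. int i - m) ` {..degree P}. fls_shift m (lp_of_poly P) $$ n * a powi n)"
    by (rule lp_eval_eq_sum_superset[OF _ support_shift_lp_of_poly]) auto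
  also have "\<dots> = (\<Sum>i\<le>degree P. coeff P i * (a ^ i * a powi (- m)))"
    by (subst sum.reindex)
      (auto simp: inj_on_def lp_of_poly_def power_int_diff assms power_int_minus divide_inverse mult_ac)
  also have "\<dots> = a powi (- m) * poly P a"
    by (simp add: poly_altdef sum_distrib_left mult_ac)
  finally show ?thesis .
qed

lemma lpoly_iff_shift_lp_of_poly: "lpoly f \<longleftrightarrow> (\<exists>P m. f = fls_shift m (lp_of_poly P))"
proof
  assume "lpoly f"
  hence fin: "finite {n. f $$ n \<noteq> 0}" by (simp add: lpoly_def)
  define N where "N = nat (Max (insert 0 (abs ` {n. f $$ n \<noteq> 0})))"
  have N: "\<bar>n\<bar> \<le> int N" if "f $$ n \<noteq> 0" for n
  proof -
    have "\<bar>n\<bar> \<le> Max (insert 0 (abs ` {n. f $$ n \<noteq> 0}))" using fin that by (intro Max_ge) auto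
    thus ?thesis unfolding N_def by linarith
  qed
  define P where "P = truncate_fps (2 * N + 1) (Abs_fps (\<lambda>k. f $$ (int k - int N)))"
  have "f = fls_shift (int N) (lp_of_poly P)"
  proof (rule fls_eqI)
    fix n
    show "f $$ n = fls_shift (int N) (lp_of_poly P) $$ n"
      using N[of n] by (cases "f $$ n = 0") (auto simp: lp_of_poly_def P_def coeff_truncate_fps)
  qed
  thus "\<exists>P m. f = fls_shift m (lp_of_poly P)" by blast
qed (auto simp: lpoly_shift_lp_of_poly)

lemma lp_of_poly_mult: "lp_of_poly (P * Q) = lp_of_poly P * lp_of_poly Q"
  by (simp add: lp_of_poly_def fps_of_poly_mult fls_times_fps_to_fls)

lemma lpoly_lp_of_poly: "lpoly (lp_of_poly P)"
  using lpoly_shift_lp_of_poly[of 0 P] by simp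

lemma lp_eval_lp_of_poly: "a \<noteq> 0 \<Longrightarrow> lp_eval (lp_of_poly P) a = poly P a"
  using lp_eval_shift_lp_of_poly[of a 0 P] by simp

lemma lp_eval_mult:
  assumes "lpoly f" "lpoly g" "a \<noteq> 0"
  shows "lp_eval (f * g) a = lp_eval f a * lp_eval g a"
proof -
  obtain P m where f: "f = fls_shift m (lp_of_poly P)"
    using assms(1) lpoly_iff_shift_lp_of_poly by blast
  obtain Q k where g: "g = fls_shift k (lp_of_poly Q)"
    using assms(2) lpoly_iff_shift_lp_of_poly by blast
  have "f * g = fls_shift (m + k) (lp_of_poly (P * Q))"
    by (simp add: f g fls_shifted_times_simps lp_of_poly_mult add.commute)
  hence "lp_eval (f * g) a = a powi (- (m + k)) * poly (P * Q) a"
    by (simp add: lp_eval_shift_lp_of_poly assms(3))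
  also have "\<dots> = (a powi (- m) * poly P a) * (a powi (- k) * poly Q a)"
  proof -
    have "a powi (- (m + k)) = a powi (- m) * a powi (- k)"
      using assms(3) by (simp add: power_int_add[symmetric])
    thus ?thesis by (simp add: mult_ac)
  qed
  also have "\<dots> = lp_eval f a * lp_eval g a"
    by (simp add: f g lp_eval_shift_lp_of_poly assms(3))
  finally show ?thesis .
qed

lemma lpoly_multiple_of_prod_linear_factors_iff:
  assumes "lpoly p" "finite R" "0 \<notin> R"
  shows "(\<exists>r. lpoly r \<and> p = lp_of_poly (\<Prod>c\<in>R. [:-c, 1:]) * r) \<longleftrightarrow> (\<forall>c\<in>R. lp_eval p c = 0)"
proof
  assume "\<exists>r. lpoly r \<and> p = lp_of_poly (\<Prod>c\<in>R. [:-c, 1:]) * r"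
  then obtain r where r: "lpoly r" "p = lp_of_poly (\<Prod>c\<in>R. [:-c, 1:]) * r" by blast
  show "\<forall>c\<in>R. lp_eval p c = 0"
  proof
    fix c assume "c \<in> R"
    moreover from this have "c \<noteq> 0" using assms(3) by blast
    ultimately show "lp_eval p c = 0"
      by (simp add: r lp_eval_mult lpoly_lp_of_poly lp_eval_lp_of_poly
          poly_prod_linear_factors_eq_0_iff assms(2))
  qed
next
  assume zero: "\<forall>c\<in>R. lp_eval p c = 0"
  obtain Q m where p: "p = fls_shift m (lp_of_poly Q)"
    using assms(1) lpoly_iff_shift_lp_of_poly by blast
  have "\<forall>c\<in>R. poly Q c = 0"
  proof
    fix c assume "c \<in> R"
    moreover from this have "c \<noteq> 0" using assms(3) by blast
    ultimately show "poly Q c = 0" using zero[rule_format, of c] by (simp add: p lp_eval_shift_lp_of_poly)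
  qed
  then obtain Q' where "Q = (\<Prod>c\<in>R. [:-c, 1:]) * Q'"
    using prod_linear_factors_dvd[OF assms(2)] by (blast elim: dvdE)
  hence "p = lp_of_poly (\<Prod>c\<in>R. [:-c, 1:]) * fls_shift m (lp_of_poly Q')"
    by (simp add: p lp_of_poly_mult fls_shifted_times_simps)
  thus "\<exists>r. lpoly r \<and> p = lp_of_poly (\<Prod>c\<in>R. [:-c, 1:]) * r"
    using lpoly_shift_lp_of_poly by blast
qed

lemma U_eq_prod_linear_factors:
  assumes "a \<noteq> 0"
  shows "U a = (\<Prod>c\<in>{a, inverse a}. [:-c, 1:])"
proof (cases "a\<^sup>2 = 1")
  case True
  hence "inverse a = a" using assms by (metis inverse_unique power2_eq_square)
  thus ?thesis using True by (simp add: U_def)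
next
  case False
  hence "inverse a \<noteq> a" using assms by (metis left_inverse power2_eq_square)
  thus ?thesis using False assms by (simp add: U_def algebra_simps)
qed

text \<open>Since U a = U (inverse a), the image U ` set as identifies such factors. Each U a
  is determined by its root set {a, inverse a}, and distinct root sets are disjoint, so the
  product over the image becomes a product over the union of the root sets.\<close>

lemma U_list_eq_prod_linear_factors:
  assumes "\<forall>a\<in>set as. a \<noteq> 0"
  shows "U_list as = (\<Prod>c\<in>set as \<union> inverse ` set as. [:-c, 1:])"
proof -
  define pair where "pair a = {a, inverse a}" for a :: complex
  define L where "L B = (\<Prod>c\<in>B. [:-c, 1:])" for B :: "complex set"
  have fin: "finite B" if "B \<in> pair ` set as" for B using that by (auto simp: pair_def)
  have roots: "{x. poly (L B) x = 0} = B" if "finite B" for B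
    using that by (simp add: L_def poly_prod_linear_factors_eq_0_iff)
  have "inj_on L (pair ` set as)"
  proof (rule inj_onI)
    fix A B assume A: "A \<in> pair ` set as" and B: "B \<in> pair ` set as" and "L A = L B"
    have "A = {x. poly (L A) x = 0}" using roots[OF fin[OF A]] by simp
    also have "\<dots> = {x. poly (L B) x = 0}" using \<open>L A = L B\<close> by simp
    also have "\<dots> = B" using roots[OF fin[OF B]] .
    finally show "A = B" .
  qed
  moreover have "U ` set as = L ` pair ` set as"
    unfolding image_image using assms
    by (intro image_cong) (simp_all add: U_eq_prod_linear_factors L_def pair_def)
  ultimately have "U_list as = (\<Prod>B\<in>pair ` set as. L B)"
    unfolding U_list_def by (simp add: prod.reindex)
  also have "\<dots> = (\<Prod>c\<in>\<Union>(pair ` set as). [:-c, 1:])"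
  proof -
    have "\<forall>A\<in>pair ` set as. \<forall>B\<in>pair ` set as. A \<noteq> B \<longrightarrow> A \<inter> B = {}"
      by (auto simp: pair_def)
    thus ?thesis using fin unfolding L_def by (subst prod.Union_disjoint) auto
  qed
  also have "\<Union>(pair ` set as) = set as \<union> inverse ` set as" by (auto simp: pair_def)
  finally show ?thesis .
qed

lemma ev_list_OA:
  assumes "lpoly p"
  shows "ev_list as (p, lp_refl p, q) = map (\<lambda>a. (lp_eval p a, lp_eval p (inverse a), lp_eval q a)) as"
  by (simp add: ev_list_def ev_def lp_eval_lp_refl assms)

lemma kernel_ev_list:
  assumes "\<forall>a\<in>set as. a \<noteq> 0"
  shows "{X \<in> OA. ev_list as X = replicate (length as) (0, 0, 0)} = I_P (U_list as)"
proof -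
  let ?R = "set as \<union> inverse ` set as"
  have R: "finite ?R" "0 \<notin> ?R" using assms by auto
  have "ev_list as X = replicate (length as) (0, 0, 0) \<longleftrightarrow> X \<in> I_P (U_list as)"
    if "X \<in> OA" for X
  proof -
    obtain p q where X: "X = (p, lp_refl p, q)" and pq: "lpoly p" "lpoly q" "lp_refl q = - q"
      using \<open>X \<in> OA\<close> by (auto simp: OA_def)
    have "ev_list as X = replicate (length as) (0, 0, 0) \<longleftrightarrow>
        (\<forall>c\<in>?R. lp_eval p c = 0) \<and> (\<forall>c\<in>?R. lp_eval q c = 0)"
      using pq by (auto simp: X ev_list_OA map_replicate_const[symmetric] lp_eval_antisymmetric)
    also have "\<dots> \<longleftrightarrow> X \<in> I_P (U_list as)"
      using \<open>X \<in> OA\<close> lpoly_multiple_of_prod_linear_factors_iff[OF pq(1) R]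
        lpoly_multiple_of_prod_linear_factors_iff[OF pq(2) R]
      by (simp add: I_P_def X U_list_eq_prod_linear_factors[OF assms])
    finally show ?thesis .
  qed
  moreover have "I_P (U_list as) \<subseteq> OA" by (auto simp: I_P_def)
  ultimately show ?thesis by blast
qed

lemma distinct_if_every_list_is_map:
  fixes xs :: "'a list"
  assumes "\<forall>ys :: 'b::zero_neq_one list. length ys = length xs \<longrightarrow> (\<exists>f. map f xs = ys)"
  shows "distinct xs"
  unfolding distinct_conv_nth
proof (intro allI impI)
  fix i j assume ij: "i < length xs" "j < length xs" "i \<noteq> j"
  obtain f :: "'a \<Rightarrow> 'b" where f: "map f xs = (replicate (length xs) 0)[i := 1]"
    using assms by (metis length_list_update length_replicate)
  have "f (xs ! i) = 1" "f (xs ! j) = 0"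
    using ij arg_cong[OF f, of "\<lambda>ys. ys ! i"] arg_cong[OF f, of "\<lambda>ys. ys ! j"] by simp_all
  thus "xs ! i \<noteq> xs ! j" by auto
qed

lemma pairwise_conditions_iff_distinct:
  fixes as :: "'a::field list"
  assumes "\<forall>a\<in>set as. a \<noteq> 0"
  shows "((\<forall>j<length as. as ! j \<noteq> 1 \<and> as ! j \<noteq> -1) \<and>
      (\<forall>j<length as. \<forall>k<length as. j \<noteq> k \<longrightarrow> as ! j \<noteq> as ! k \<and> as ! j \<noteq> inverse (as ! k)))
    \<longleftrightarrow> distinct (as @ map inverse as)"
proof -
  have self_inverse: "as ! j = inverse (as ! j) \<longleftrightarrow> as ! j = 1 \<or> as ! j = -1"
    if "j < length as" for j
  proof -
    have "as ! j \<noteq> 0" using assms that by simp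
    hence "as ! j = inverse (as ! j) \<longleftrightarrow> (as ! j)\<^sup>2 = 1"
      by (auto simp: power2_eq_square field_simps)
    thus ?thesis by (simp add: power2_eq_1_iff)
  qed
  have "inj_on inverse (set as)" by (rule inj_on_inverseI[of _ inverse]) simp
  hence "distinct (as @ map inverse as) \<longleftrightarrow> distinct as \<and> set as \<inter> inverse ` set as = {}"
    by (auto simp: distinct_map)
  also have "set as \<inter> inverse ` set as = {} \<longleftrightarrow>
      (\<forall>j<length as. \<forall>k<length as. as ! j \<noteq> inverse (as ! k))"
    by (fastforce simp: disjoint_iff in_set_conv_nth)
  finally show ?thesis
    unfolding distinct_conv_nth using self_inverse by auto
qed

lemma lpoly_interpolation:
  assumes "distinct xs" "0 \<notin> set xs" "length ys = length xs"
  shows "\<exists>p. lpoly p \<and> map (lp_eval p) xs = ys"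
proof -
  obtain P where P: "map (poly P) xs = ys" using poly_interpolation[OF assms(1,3)] by blast
  have "map (lp_eval (lp_of_poly P)) xs = map (poly P) xs"
    using assms(2) by (intro map_cong refl lp_eval_lp_of_poly) blast
  thus ?thesis using P lpoly_lp_of_poly by metis
qed

lemma antisymmetric_lpoly_interpolation:
  assumes "distinct (as @ map inverse as)" "0 \<notin> set as" "length hs = length as"
  shows "\<exists>q. lpoly q \<and> lp_refl q = - q \<and> map (lp_eval q) as = hs"
proof -
  have "0 \<notin> set (as @ map inverse as)" using assms(2) by auto
  then obtain g where g: "lpoly g"
    and vals: "map (lp_eval g) (as @ map inverse as) = map (\<lambda>h. h / 2) hs @ map (\<lambda>h. - h / 2) hs"
    using lpoly_interpolation[OF assms(1) _, of "map (\<lambda>h. h / 2) hs @ map (\<lambda>h. - h / 2) hs"]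
      assms(3) by auto
  define q where "q = g - lp_refl g"
  have "lpoly q" "lp_refl q = - q"
    by (simp_all add: q_def g lpoly_diff lpoly_lp_refl lp_refl_diff lp_refl_lp_refl)
  moreover have "map (lp_eval q) as = hs"
  proof (rule nth_equalityI)
    fix j assume "j < length (map (lp_eval q) as)"
    hence j: "j < length as" by simp
    have g_vals: "lp_eval g (as ! j) = hs ! j / 2" "lp_eval g (inverse (as ! j)) = - hs ! j / 2"
      using arg_cong[OF vals, of "\<lambda>l. l ! j"] arg_cong[OF vals, of "\<lambda>l. l ! (length as + j)"]
        j assms(3)
      by (simp_all add: nth_append)
    have "lp_eval q (as ! j) = lp_eval g (as ! j) - lp_eval g (inverse (as ! j))"
      by (simp add: q_def lp_eval_diff g lpoly_lp_refl lp_eval_lp_refl)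
    also have "\<dots> = hs ! j"
      unfolding g_vals by (simp add: field_simps)
    finally show "map (lp_eval q) as ! j = hs ! j" using j by simp
  qed (simp add: assms(3))
  ultimately show ?thesis by blast
qed

lemma distinct_if_ev_list_surj:
  assumes "\<forall>v. length v = length as \<longrightarrow> (\<exists>X\<in>OA. ev_list as X = v)"
  shows "distinct (as @ map inverse as)"
proof (rule distinct_if_every_list_is_map[where 'b = complex], intro allI impI)
  fix ys :: "complex list"
  assume len: "length ys = length (as @ map inverse as)"
  define n where "n = length as"
  define v where "v = map (\<lambda>j. (ys ! j, ys ! (n + j), 0 :: complex)) [0..<n]"
  have "length v = length as" by (simp add: v_def n_def)
  with assms obtain X where "X \<in> OA" and X: "ev_list as X = v" by blast
  then obtain p q where "lpoly p" and pq: "X = (p, lp_refl p, q)" by (auto simp: OA_def)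
  have "lp_eval p (as ! j) = ys ! j \<and> lp_eval p (inverse (as ! j)) = ys ! (n + j)"
    if "j < n" for j
    using arg_cong[OF X, of "\<lambda>l. l ! j"] that
    by (simp add: pq ev_list_OA \<open>lpoly p\<close> v_def n_def)
  hence "map (lp_eval p) (as @ map inverse as) = ys"
    using len by (intro nth_equalityI) (auto simp: nth_append n_def)
  thus "\<exists>f. map f (as @ map inverse as) = ys" by blast
qed

lemma ev_list_surj_if_distinct:
  assumes "\<forall>a\<in>set as. a \<noteq> 0" "distinct (as @ map inverse as)" "length v = length as"
  shows "\<exists>X\<in>OA. ev_list as X = v"
proof -
  have "0 \<notin> set (as @ map inverse as)" "0 \<notin> set as" using assms(1) by auto
  then obtain p where p: "lpoly p"
    and p_vals: "map (lp_eval p) (as @ map inverse as) = map fst v @ map (fst \<circ> snd) v"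
    using lpoly_interpolation[OF assms(2) _, of "map fst v @ map (fst \<circ> snd) v"] assms(3) by auto
  obtain q where q: "lpoly q" "lp_refl q = - q" and q_vals: "map (lp_eval q) as = map (snd \<circ> snd) v"
    using antisymmetric_lpoly_interpolation[OF assms(2) \<open>0 \<notin> set as\<close>, of "map (snd \<circ> snd) v"]
      assms(3) by auto
  have "(p, lp_refl p, q) \<in> OA" using p q by (auto simp: OA_def)
  moreover have "ev_list as (p, lp_refl p, q) = v"
  proof (rule nth_equalityI)
    fix j assume "j < length (ev_list as (p, lp_refl p, q))"
    hence j: "j < length as" by (simp add: ev_list_def)
    have "lp_eval p (as ! j) = fst (v ! j)" "lp_eval p (inverse (as ! j)) = fst (snd (v ! j))"
      and "lp_eval q (as ! j) = snd (snd (v ! j))"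
      using arg_cong[OF p_vals, of "\<lambda>l. l ! j"] arg_cong[OF p_vals, of "\<lambda>l. l ! (length as + j)"]
        arg_cong[OF q_vals, of "\<lambda>l. l ! j"] j assms(3)
      by (simp_all add: nth_append)
    thus "ev_list as (p, lp_refl p, q) ! j = v ! j"
      using j by (simp add: ev_list_OA p prod_eq_iff)
  qed (simp add: ev_list_def assms(3))
  ultimately show ?thesis by blast
qed

theorem lemma14:
  fixes as :: "complex list"
  assumes "\<forall>a\<in>set as. a \<noteq> 0"
  shows "({X \<in> OA. ev_list as X = replicate (length as) (0, 0, 0)} = I_P (U_list as)) \<and>
    ((\<forall>v. length v = length as \<longrightarrow> (\<exists>X\<in>OA. ev_list as X = v)) \<longleftrightarrow>
           ((\<forall>j<length as. as ! j \<noteq> 1 \<and> as ! j \<noteq> -1) \<and>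
            (\<forall>j<length as. \<forall>k<length as. j \<noteq> k \<longrightarrow> as ! j \<noteq> as ! k \<and> as ! j \<noteq> inverse (as ! k))))"
proof -
  have "(\<forall>v. length v = length as \<longrightarrow> (\<exists>X\<in>OA. ev_list as X = v)) \<longleftrightarrow>
      distinct (as @ map inverse as)"
    using distinct_if_ev_list_surj ev_list_surj_if_distinct[OF assms] by blast
  thus ?thesis using kernel_ev_list[OF assms] pairwise_conditions_iff_distinct[OF assms] by blast
qed

end
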